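(* Let $\Lambda$ be a row-finite $k$-graph with no sources, and let $\{t_\lambda\}_{\lambda\in\Lambda}$ be a purely atomic representation of $C^*(\Lambda)$ on a Hilbert space $\mathcal H$, with associated projection valued measure $P$ on the Borel subsets of $\Lambda^\infty$. Then: (a) For every $\lambda\in\Lambda$ and every $\omega\in\Lambda^\infty$ with $r(\omega)=s(\lambda)$ we have $t_\lambda P(\{\omega\})t_\lambda^*=P(\{\lambda\omega\})$; and for every $\omega\in\Lambda^\infty$ and $n\in\mathbb N^k$ we have $t_{\omega(0,n)}^*P(\{\omega\})t_{\omega(0,n)}=P(\{\sigma^n(\omega)\})$. (b) For $n\in\mathbb N^k$, $\eta\in\Lambda^n$ and $\omega\in\Lambda^\infty$ with $\eta\neq\omega(0,n)$, we have $t_\eta^*P(\{\omega\})t_\eta=0$.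
   Context: A $k$-graph ($k\ge 1$) is a countable small category $\Lambda$ with a functor $d:\Lambda\to\mathbb N^k$ (the degree) satisfying the factorization property: whenever $d(\lambda)=m+n$ there are unique $\mu,\nu\in\Lambda$ with $\lambda=\mu\nu$, $d(\mu)=m$, $d(\nu)=n$. Morphisms are called paths, objects (identified with identity morphisms) form the vertex set $\Lambda^0$; $r,s$ denote range and source; $\Lambda^n=\{\lambda:d(\lambda)=n\}$ and $v\Lambda^n=\{\lambda\in\Lambda^n:r(\lambda)=v\}$. $\Lambda$ is row-finite if each $v\Lambda^n$ is finite, and has no sources if each $v\Lambda^n$ is nonempty. Let $\Omega_k$ be the $k$-graph with objects $\mathbb N^k$, morphisms $\{(p,q)\in\mathbb N^k\times\mathbb N^k:p\le q\}$, $r(p,q)=p$, $s(p,q)=q$, $d(p,q)=q-p$. An infinite path is a degree-preserving functor $x:\Omega_k\to\Lambda$; $\Lambda^\infty$ is the set of infinite paths, $r(x)=x(0,0)$, and $x(0,n)\in\Lambda^n$. The shift is $\sigma^m(x)(p,q)=x(p+m,q+m)$. For $\lambda\in\Lambda$ and $x\in\Lambda^\infty$ with $r(x)=s(\lambda)$, $\lambda x$ denotes the unique $y\in\Lambda^\infty$ with $y(0,d(\lambda))=\lambda$ and $\sigma^{d(\lambda)}(y)=x$. Cylinder sets are $Z(\lambda)=\{x\in\Lambda^\infty:x(0,d(\lambda))=\lambda\}$; they generate the Borel $\sigma$-algebra of $\Lambda^\infty$. A representation of $C^*(\Lambda)$ is a family $\{t_\lambda\}_{\lambda\in\Lambda}$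 of partial isometries on a Hilbert space with: (CK1) $\{t_v\}_{v\in\Lambda^0}$ mutually orthogonal projections; (CK2) $t_\lambda t_\eta=t_{\lambda\eta}$ when $s(\lambda)=r(\eta)$; (CK3) $t_\lambda^*t_\lambda=t_{s(\lambda)}$; (CK4) $t_v=\sum_{\lambda\in v\Lambda^n}t_\lambda t_\lambda^*$ for all $v,n$. The associated projection valued measure $P$ is the projection valued measure on the Borel sets of $\Lambda^\infty$ with $P(Z(\lambda))=t_\lambda t_\lambda^*$ for all $\lambda$. The representation is purely atomic if there is a Borel set $\Omega\subseteq\Lambda^\infty$ with $P(\Lambda^\infty\setminus\Omega)=0$, $P(\{\omega\})\ne0$ for all $\omega\in\Omega$, and $\sum_{\omega\in\Omega}P(\{\omega\})=\mathrm{Id}$ (strong operator topology). *)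

theory Defs
  imports "HOL-Analysis.Analysis" "HOL-Library.Function_Algebras"
begin

section \<open>Complex Hilbert spaces (the library has only real inner product spaces)\<close>

class chilbert = ab_group_add +
  fixes scaleC :: "complex \<Rightarrow> 'a \<Rightarrow> 'a" (infixr "*\<^sub>C" 75)
    and cinner :: "'a \<Rightarrow> 'a \<Rightarrow> complex"
  assumes scaleC_add_right: "a *\<^sub>C (x + y) = a *\<^sub>C x + a *\<^sub>C y"
    and scaleC_add_left: "(a + b) *\<^sub>C x = a *\<^sub>C x + b *\<^sub>C x"
    and scaleC_scaleC: "a *\<^sub>C (b *\<^sub>C x) = (a * b) *\<^sub>C x"
    and scaleC_one: "1 *\<^sub>C x = x"
    and cinner_add_right: "cinner x (y + z) = cinner x y + cinner x z"
    and cinner_scaleC_right: "cinner x (a *\<^sub>C y) = a * cinner x y"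
    and cinner_commute: "cinner y x = cnj (cinner x y)"
    and cinner_self_nonneg: "Im (cinner x x) = 0 \<and> Re (cinner x x) \<ge> 0"
    and cinner_self_eq_zero: "cinner x x = 0 \<longleftrightarrow> x = 0"
    and cinner_complete:
      "(\<forall>e>0. \<exists>N::nat. \<forall>m\<ge>N. \<forall>n\<ge>N. Re (cinner ((X::nat \<Rightarrow> 'a) m - X n) (X m - X n)) < e)
        \<Longrightarrow> \<exists>L. \<forall>e>0. \<exists>N. \<forall>n\<ge>N. Re (cinner (X n - L) (X n - L)) < e"

definition cnorm :: "'a::chilbert \<Rightarrow> real" where
  "cnorm x = sqrt (Re (cinner x x))"

definition bop :: "('a::chilbert \<Rightarrow> 'a) \<Rightarrow> bool" where
  "bop T \<longleftrightarrow> (\<forall>x y. T (x + y) = T x + T y) \<and> (\<forall>a x. T (a *\<^sub>C x) = a *\<^sub>C T x)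
     \<and> (\<exists>K. \<forall>x. cnorm (T x) \<le> K * cnorm x)"

definition adj :: "('a::chilbert \<Rightarrow> 'a) \<Rightarrow> ('a \<Rightarrow> 'a)" where
  "adj T = (SOME S. \<forall>x y. cinner (T x) y = cinner x (S y))"

definition is_proj :: "('a::chilbert \<Rightarrow> 'a) \<Rightarrow> bool" where
  "is_proj T \<longleftrightarrow> bop T \<and> T \<circ> T = T \<and> adj T = T"

text \<open>N^k is modelled as 'k \<Rightarrow> nat for a finite type 'k (with k = CARD('k)); order, plus and
  minus are pointwise. Vertices (objects) are identified with identity morphisms.\<close>

record ('p, 'k) kgraph =
  paths :: "'p set"
  vert  :: "'p set"
  rng   :: "'p \<Rightarrow> 'p"
  src   :: "'p \<Rightarrow> 'p"
  comp  :: "'p \<Rightarrow> 'p \<Rightarrow> 'p"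
  deg   :: "'p \<Rightarrow> 'k \<Rightarrow> nat"

definition is_kgraph :: "('p, 'k::finite) kgraph \<Rightarrow> bool" where
  "is_kgraph G \<longleftrightarrow>
     countable (paths G) \<and> vert G \<subseteq> paths G \<and>
     (\<forall>l\<in>paths G. rng G l \<in> vert G \<and> src G l \<in> vert G) \<and>
     (\<forall>v\<in>vert G. rng G v = v \<and> src G v = v) \<and>
     (\<forall>l\<in>paths G. \<forall>m\<in>paths G. src G l = rng G m \<longrightarrow>
        comp G l m \<in> paths G \<and> rng G (comp G l m) = rng G l \<and> src G (comp G l m) = src G m) \<and>
     (\<forall>l\<in>paths G. \<forall>m\<in>paths G. \<forall>n\<in>paths G. src G l = rng G m \<longrightarrow> src G m = rng G n \<longrightarrow>
        comp G (comp G l m) n = comp G l (comp G m n)) \<and>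
     (\<forall>l\<in>paths G. comp G (rng G l) l = l \<and> comp G l (src G l) = l) \<and>
     (\<forall>l\<in>paths G. \<forall>m\<in>paths G. src G l = rng G m \<longrightarrow>
        deg G (comp G l m) = deg G l + deg G m) \<and>
     (\<forall>v\<in>vert G. deg G v = 0) \<and>
     (\<forall>l\<in>paths G. \<forall>m n. deg G l = m + n \<longrightarrow>
        (\<exists>!(a, b). a \<in> paths G \<and> b \<in> paths G \<and> src G a = rng G b \<and>
                   l = comp G a b \<and> deg G a = m \<and> deg G b = n))"

definition row_finite :: "('p, 'k) kgraph \<Rightarrow> bool" where
  "row_finite G \<longleftrightarrow> (\<forall>v\<in>vert G. \<forall>n. finite {l\<in>paths G. rng G l = v \<and> deg G l = n})"

definition no_sources :: "('p, 'k) kgraph \<Rightarrow> bool" where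
  "no_sources G \<longleftrightarrow> (\<forall>v\<in>vert G. \<forall>n. {l\<in>paths G. rng G l = v \<and> deg G l = n} \<noteq> {})"

text \<open>Infinite paths: degree-preserving functors from Omega_k, i.e. x p q defined for p \<le> q
  (normalised to undefined elsewhere so that equality is extensional).\<close>

type_synonym ('p, 'k) ipath = "('k \<Rightarrow> nat) \<Rightarrow> ('k \<Rightarrow> nat) \<Rightarrow> 'p"

definition inf_paths :: "('p, 'k::finite) kgraph \<Rightarrow> ('p, 'k) ipath set" where
  "inf_paths G = {x.
     (\<forall>p q. p \<le> q \<longrightarrow> x p q \<in> paths G \<and> deg G (x p q) = q - p \<and>
                        rng G (x p q) = x p p \<and> src G (x p q) = x q q) \<and>
     (\<forall>p. x p p \<in> vert G) \<and>
     (\<forall>p q r. p \<le> q \<longrightarrow> q \<le> r \<longrightarrow> comp G (x p q) (x q r) = x p r) \<and>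
     (\<forall>p q. \<not> p \<le> q \<longrightarrow> x p q = undefined)}"

definition shift :: "('k \<Rightarrow> nat) \<Rightarrow> ('p, 'k) ipath \<Rightarrow> ('p, 'k) ipath" where
  "shift m x = (\<lambda>p q. x (p + m) (q + m))"

text \<open>lambda x: the unique infinite path y with y(0,d(lambda)) = lambda and shift^{d(lambda)} y = x\<close>
definition pcomp :: "('p, 'k::finite) kgraph \<Rightarrow> 'p \<Rightarrow> ('p, 'k) ipath \<Rightarrow> ('p, 'k) ipath" where
  "pcomp G l x = (THE y. y \<in> inf_paths G \<and> y 0 (deg G l) = l \<and> shift (deg G l) y = x)"

definition cyl :: "('p, 'k::finite) kgraph \<Rightarrow> 'p \<Rightarrow> ('p, 'k) ipath set" where
  "cyl G l = {x \<in> inf_paths G. x 0 (deg G l) = l}"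

definition path_borel :: "('p, 'k::finite) kgraph \<Rightarrow> ('p, 'k) ipath set set" where
  "path_borel G = sigma_sets (inf_paths G) (cyl G ` paths G)"

definition ck_rep :: "('p, 'k::finite) kgraph \<Rightarrow> ('p \<Rightarrow> 'a::chilbert \<Rightarrow> 'a) \<Rightarrow> bool" where
  "ck_rep G t \<longleftrightarrow>
     (\<forall>l\<in>paths G. bop (t l)) \<and>
     (\<forall>v\<in>vert G. is_proj (t v)) \<and>
     (\<forall>v\<in>vert G. \<forall>w\<in>vert G. v \<noteq> w \<longrightarrow> t v \<circ> t w = (\<lambda>_. 0)) \<and>
     (\<forall>l\<in>paths G. \<forall>m\<in>paths G. src G l = rng G m \<longrightarrow> t (comp G l m) = t l \<circ> t m) \<and>
     (\<forall>l\<in>paths G. adj (t l) \<circ> t l = t (src G l)) \<and>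
     (\<forall>v\<in>vert G. \<forall>n h. t v h = (\<Sum>l\<in>{l\<in>paths G. rng G l = v \<and> deg G l = n}. t l (adj (t l) h)))"

definition is_pvm :: "'x set \<Rightarrow> 'x set set \<Rightarrow> ('x set \<Rightarrow> 'a::chilbert \<Rightarrow> 'a) \<Rightarrow> bool" where
  "is_pvm X M P \<longleftrightarrow>
     (\<forall>A\<in>M. is_proj (P A)) \<and>
     P {} = (\<lambda>_. 0) \<and> P X = id \<and>
     (\<forall>A\<in>M. \<forall>B\<in>M. P (A \<inter> B) = P A \<circ> P B) \<and>
     (\<forall>A :: nat \<Rightarrow> 'x set. range A \<subseteq> M \<longrightarrow> disjoint_family A \<longrightarrow>
        (\<forall>h. (\<lambda>N. cnorm (P (\<Union>n. A n) h - (\<Sum>n<N. P (A n) h))) \<longlonglongrightarrow> 0))"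

definition assoc_pvm :: "('p, 'k::finite) kgraph \<Rightarrow> ('p \<Rightarrow> 'a::chilbert \<Rightarrow> 'a)
    \<Rightarrow> (('p, 'k) ipath set \<Rightarrow> 'a \<Rightarrow> 'a) \<Rightarrow> bool" where
  "assoc_pvm G t P \<longleftrightarrow> is_pvm (inf_paths G) (path_borel G) P \<and>
     (\<forall>l\<in>paths G. P (cyl G l) = t l \<circ> adj (t l))"

definition purely_atomic :: "('p, 'k::finite) kgraph \<Rightarrow> (('p, 'k) ipath set \<Rightarrow> 'a::chilbert \<Rightarrow> 'a) \<Rightarrow> bool" where
  "purely_atomic G P \<longleftrightarrow> (\<exists>Om\<in>path_borel G.
     P (inf_paths G - Om) = (\<lambda>_. 0) \<and>
     (\<forall>w\<in>Om. P {w} \<noteq> (\<lambda>_. 0)) \<and>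
     (\<forall>h. \<forall>e>0. \<exists>F. finite F \<and> F \<subseteq> Om \<and>
        (\<forall>F'. finite F' \<longrightarrow> F \<subseteq> F' \<longrightarrow> F' \<subseteq> Om \<longrightarrow> cnorm (h - (\<Sum>w\<in>F'. P {w} h)) < e)))"

end

theory Submission
  imports Defs
begin

text \<open>
  Let \<open>\<omega>' = l \<omega>\<close> and \<open>Q = t\<^sub>l P{\<omega>} t\<^sub>l\<^sup>*\<close>. Since \<open>\<omega>\<close> lies in every cylinder \<open>Z(\<omega>(0,n))\<close>, the
  range of \<open>P{\<omega>}\<close> lies in that of \<open>t\<^bsub>\<omega>(0,n)\<^esub>\<close>, so the range of \<open>Q\<close> lies in that of
  \<open>t\<^bsub>l \<omega>(0,n)\<^esub>\<close>, which is annihilated by \<open>P{w}\<close> whenever \<open>w \<notin> Z(l \<omega>(0,n))\<close>. Every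
  \<open>w \<noteq> \<omega>'\<close> leaves one of these cylinders, and pure atomicity turns this into
  \<open>P{\<omega>'} Q = Q\<close>. The same argument shows that \<open>P{\<omega>}\<close> fixes the range of \<open>t\<^sub>l\<^sup>* P{\<omega>'}\<close>,
  and as \<open>\<omega>' \<in> Z(l)\<close> this gives \<open>Q P{\<omega>'} = P{\<omega>'}\<close>; two self-adjoint operators absorbing
  each other in this way are equal. Conjugating by \<open>t\<^sub>l\<^sup>*\<close> then recovers \<open>P{\<omega>}\<close>, which for
  \<open>l = \<omega>(0,n)\<close> is the shifted identity. Part (b) holds because \<open>t\<^sub>\<eta>\<close> maps into the range of
  \<open>P(Z(\<eta>))\<close>, which is orthogonal to \<open>P{\<omega>}\<close> when \<open>\<eta> \<noteq> \<omega>(0,n)\<close>.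

  The Hilbert space is an abstract class, so the existence of adjoints of bounded
  operators (without which \<open>adj\<close> is meaningless) is derived from a Riesz representation
  theorem, proved via the vector of minimal norm in a closed hyperplane.
\<close>

section \<open>Complex inner product spaces\<close>

lemma scaleC_zero_left [simp]: "0 *\<^sub>C (x::'a::chilbert) = 0"
  using scaleC_add_left[of 0 0 x] by simp

lemma cinner_zero_right [simp]: "cinner x (0::'a::chilbert) = 0"
  using cinner_add_right[of x 0 0] by simp

lemma cinner_zero_left [simp]: "cinner (0::'a::chilbert) x = 0"
  using cinner_commute[of 0 x] by simp

lemma cinner_diff_right: "cinner x (y - z) = cinner x y - cinner (x::'a::chilbert) z"
  using cinner_add_right[of x "y - z" z] by simp

lemma cinner_add_left: "cinner (x + y) z = cinner x z + cinner (y::'a::chilbert) z"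
  by (metis cinner_add_right cinner_commute complex_cnj_add)

lemma cinner_diff_left: "cinner (x - y) z = cinner x z - cinner (y::'a::chilbert) z"
  by (metis cinner_diff_right cinner_commute complex_cnj_diff)

lemma cinner_scaleC_left: "cinner (a *\<^sub>C x) y = cnj a * cinner (x::'a::chilbert) y"
  by (metis cinner_scaleC_right cinner_commute complex_cnj_mult)

definition sq_cnorm :: "'a::chilbert \<Rightarrow> real" where
  "sq_cnorm x = Re (cinner x x)"

lemma cinner_self: "cinner x x = complex_of_real (sq_cnorm x)"
  using cinner_self_nonneg[of x] by (simp add: sq_cnorm_def complex_eq_iff)

lemma sq_cnorm_nonneg: "sq_cnorm x \<ge> 0"
  using cinner_self_nonneg[of x] by (simp add: sq_cnorm_def)

lemma sq_cnorm_eq_0: "sq_cnorm x = 0 \<longleftrightarrow> x = 0"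
  using cinner_self[of x] cinner_self_eq_zero[of x] by auto

lemma cnorm_eq_sqrt: "cnorm x = sqrt (sq_cnorm x)"
  by (simp add: cnorm_def sq_cnorm_def)

lemma cnorm_nonneg: "cnorm x \<ge> 0"
  by (simp add: cnorm_eq_sqrt sq_cnorm_nonneg)

lemma cnorm_eq_0: "cnorm x = 0 \<longleftrightarrow> x = 0"
  by (simp add: cnorm_eq_sqrt sq_cnorm_eq_0)

lemma sq_cnorm_add: "sq_cnorm (x + y) = sq_cnorm x + sq_cnorm y + 2 * Re (cinner x y)"
  using cinner_commute[of y x]
  by (simp add: sq_cnorm_def cinner_add_left cinner_add_right)

lemma sq_cnorm_diff: "sq_cnorm (x - y) = sq_cnorm x + sq_cnorm y - 2 * Re (cinner x y)"
  using cinner_commute[of y x]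
  by (simp add: sq_cnorm_def cinner_diff_left cinner_diff_right)

lemma parallelogram_law: "sq_cnorm (x + y) + sq_cnorm (x - y) = 2 * sq_cnorm x + 2 * sq_cnorm y"
  by (simp add: sq_cnorm_add sq_cnorm_diff)

lemma sq_cnorm_diff_commute: "sq_cnorm (x - y) = sq_cnorm (y - x)"
  using cinner_commute[of x y] by (simp add: sq_cnorm_diff)

lemma sq_cnorm_scaleC: "sq_cnorm (a *\<^sub>C x) = (cmod a)\<^sup>2 * sq_cnorm x"
proof -
  have "sq_cnorm (a *\<^sub>C x) = Re ((a * cnj a) * cinner x x)"
    by (simp add: sq_cnorm_def cinner_scaleC_left cinner_scaleC_right mult_ac)
  also have "\<dots> = (cmod a)\<^sup>2 * sq_cnorm x"
    by (simp only: complex_norm_square[symmetric] cinner_self flip: of_real_mult) simp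
  finally show ?thesis .
qed

lemma cauchy_schwarz: "(cmod (cinner x y))\<^sup>2 \<le> sq_cnorm x * sq_cnorm y"
proof (cases "y = 0")
  case True
  then show ?thesis
    by (simp add: sq_cnorm_def)
next
  case False
  define N where "N = sq_cnorm y"
  have N: "N > 0"
    using False sq_cnorm_eq_0[of y] sq_cnorm_nonneg[of y] unfolding N_def by linarith
  define c where "c = cinner y x / complex_of_real N"
  \<comment> \<open>\<open>x - c y\<close> is the component of \<open>x\<close> orthogonal to \<open>y\<close>\<close>
  have "sq_cnorm (x - c *\<^sub>C y) = sq_cnorm x - (cmod (cinner x y))\<^sup>2 / N"
  proof -
    have "cinner (x - c *\<^sub>C y) (x - c *\<^sub>C y)
        = cinner x x - cinner x y * cnj (cinner x y) / complex_of_real N"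
      using N cinner_commute[of y x] cinner_self[of y]
      by (simp add: c_def N_def cinner_diff_left cinner_diff_right cinner_scaleC_left
          cinner_scaleC_right field_simps)
    then show ?thesis
      by (simp add: sq_cnorm_def complex_norm_square[symmetric] flip: of_real_divide)
  qed
  with sq_cnorm_nonneg[of "x - c *\<^sub>C y"] N show ?thesis
    by (simp add: N_def field_simps)
qed

lemma cmod_cinner_le: "cmod (cinner x y) \<le> cnorm x * cnorm y"
proof (rule power2_le_imp_le)
  show "(cmod (cinner x y))\<^sup>2 \<le> (cnorm x * cnorm y)\<^sup>2"
    using cauchy_schwarz[of x y] by (simp add: cnorm_eq_sqrt power_mult_distrib sq_cnorm_nonneg)
qed (simp add: cnorm_nonneg)

lemma cinner_complete_tendsto:
  fixes X :: "nat \<Rightarrow> 'a::chilbert"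
  assumes "\<And>e. e > 0 \<Longrightarrow> \<exists>N. \<forall>m\<ge>N. \<forall>n\<ge>N. sq_cnorm (X m - X n) < e"
  shows "\<exists>L. (\<lambda>n. sq_cnorm (X n - L)) \<longlonglongrightarrow> 0"
proof -
  obtain L where "\<And>e. e > 0 \<Longrightarrow> \<exists>N. \<forall>n\<ge>N. sq_cnorm (X n - L) < e"
    using cinner_complete[of X] assms unfolding sq_cnorm_def by blast
  then have "(\<lambda>n. sq_cnorm (X n - L)) \<longlonglongrightarrow> 0"
    by (intro LIMSEQ_I) (simp add: sq_cnorm_nonneg)
  then show ?thesis ..
qed

lemma minimizing_sequence_Cauchy:
  fixes X :: "nat \<Rightarrow> 'a::chilbert"
  assumes mid: "\<And>m n. 4 * d \<le> sq_cnorm (X m + X n)"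
    and min: "\<And>n. sq_cnorm (X n) < d + inverse (real (Suc n))"
    and e: "e > 0"
  shows "\<exists>N. \<forall>m\<ge>N. \<forall>n\<ge>N. sq_cnorm (X m - X n) < e"
proof -
  obtain N where N: "inverse (real (Suc N)) < e / 4"
    using e reals_Archimedean[of "e / 4"] by auto
  have "sq_cnorm (X m - X n) < e" if "m \<ge> N" "n \<ge> N" for m n
  proof -
    have "inverse (real (Suc m)) \<le> inverse (real (Suc N))" "inverse (real (Suc n)) \<le> inverse (real (Suc N))"
      using that by (simp_all add: le_imp_inverse_le)
    then show ?thesis
      using parallelogram_law[of "X m" "X n"] mid[of m n] min[of m] min[of n] N by linarith
  qed
  then show ?thesis
    by blast
qed

lemma bounded_functional_tendsto:
  fixes f :: "'a::chilbert \<Rightarrow> complex"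
  assumes add: "\<And>x y. f (x + y) = f x + f y"
    and bnd: "\<And>x. cmod (f x) \<le> K * cnorm x"
    and X: "(\<lambda>n. sq_cnorm (X n - L)) \<longlonglongrightarrow> 0"
  shows "(\<lambda>n. f (X n)) \<longlonglongrightarrow> f L"
proof -
  have diff: "f (X n) - f L = f (X n - L)" for n
    using add[of "X n - L" L] by simp
  have "(\<lambda>n. K * cnorm (X n - L)) \<longlonglongrightarrow> 0"
    using tendsto_mult_right_zero[OF tendsto_real_sqrt[OF X, unfolded real_sqrt_zero]]
    by (simp add: cnorm_eq_sqrt)
  then have "(\<lambda>n. f (X n) - f L) \<longlonglongrightarrow> 0"
    by (rule Lim_null_comparison[rotated]) (simp add: diff bnd)
  then show ?thesis
    by (rule Lim_null[THEN iffD2])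
qed

lemma minimizing_sequence_limit_le:
  fixes X :: "nat \<Rightarrow> 'a::chilbert"
  assumes L: "(\<lambda>n. sq_cnorm (X n - L)) \<longlonglongrightarrow> 0"
    and X_min: "\<And>n. sq_cnorm (X n) < d + inverse (real (Suc n))"
    and reflected: "\<And>n. d \<le> sq_cnorm (X n - (L - X n))"
    and X_ge: "\<And>n. d \<le> sq_cnorm (X n)"
  shows "sq_cnorm L \<le> d"
proof -
  have "(\<lambda>n. sq_cnorm (X n)) \<longlonglongrightarrow> d"
  proof (rule tendsto_sandwich[of "\<lambda>_. d" _ _ "\<lambda>n. d + inverse (real (Suc n))"])
    show "(\<lambda>n. d + inverse (real (Suc n))) \<longlonglongrightarrow> d"
      by (rule LIMSEQ_inverse_real_of_nat_add)
  qed (use X_ge less_imp_le[OF X_min] in simp_all)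
  then have lim: "(\<lambda>n. 2 * sq_cnorm (X n) + 2 * sq_cnorm (X n - L) - d) \<longlonglongrightarrow> 2 * d + 2 * 0 - d"
    by (intro tendsto_intros L)
  have "sq_cnorm L \<le> 2 * sq_cnorm (X n) + 2 * sq_cnorm (X n - L) - d" for n
    using parallelogram_law[of "X n" "L - X n"] sq_cnorm_diff_commute[of L "X n"] reflected[of n] by simp
  then show ?thesis
    using LIMSEQ_le_const[OF lim] by simp
qed

lemma bounded_functional_minimal_vector:
  fixes f :: "'a::chilbert \<Rightarrow> complex"
  assumes add: "\<And>x y. f (x + y) = f x + f y"
    and hom: "\<And>a x. f (a *\<^sub>C x) = a * f x"
    and bnd: "\<And>x. cmod (f x) \<le> K * cnorm x"
    and u: "f u \<noteq> 0"
  shows "\<exists>L. f L = 1 \<and> (\<forall>x. f x = 1 \<longrightarrow> sq_cnorm L \<le> sq_cnorm x)"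
proof -
  have f_diff: "f (x - y) = f x - f y" for x y
    using add[of "x - y" y] by simp
  define C where "C = {x. f x = 1}"
  define d where "d = Inf (sq_cnorm ` C)"
  have C_ne: "sq_cnorm ` C \<noteq> {}"
    using u hom[of "1 / f u" u] unfolding C_def by auto
  have bdd: "bdd_below (sq_cnorm ` C)"
    by (rule bdd_belowI[of _ 0]) (auto simp: sq_cnorm_nonneg)
  have d_le: "d \<le> sq_cnorm x" if "f x = 1" for x
    using that bdd unfolding d_def C_def by (simp add: cInf_lower)
  have "\<exists>x. f x = 1 \<and> sq_cnorm x < d + inverse (real (Suc n))" for n
    using cInf_less_iff[OF C_ne bdd, of "d + inverse (real (Suc n))"] unfolding d_def C_def by auto
  then obtain X where X1: "\<And>n. f (X n) = 1"
    and X_min: "\<And>n. sq_cnorm (X n) < d + inverse (real (Suc n))"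
    by metis
  have "4 * d \<le> sq_cnorm (X m + X n)" for m n
  proof -
    have "f ((1 / 2) *\<^sub>C (X m + X n)) = 1"
      by (simp add: add hom X1)
    then have "d \<le> sq_cnorm ((1 / 2) *\<^sub>C (X m + X n))"
      by (rule d_le)
    then show ?thesis
      by (simp add: sq_cnorm_scaleC power2_eq_square)
  qed
  then obtain L where L: "(\<lambda>n. sq_cnorm (X n - L)) \<longlonglongrightarrow> 0"
    using cinner_complete_tendsto minimizing_sequence_Cauchy X_min by metis
  have "(\<lambda>n. f (X n)) \<longlonglongrightarrow> f L"
    using add bnd L by (rule bounded_functional_tendsto)
  then have fL: "f L = 1"
    using X1 by (simp add: LIMSEQ_const_iff)
  have "sq_cnorm L \<le> d"
  proof (rule minimizing_sequence_limit_le[OF L X_min])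
    show "d \<le> sq_cnorm (X n - (L - X n))" for n
      by (rule d_le) (simp add: f_diff X1 fL)
  qed (rule d_le[OF X1])
  then show ?thesis
    using fL d_le by force
qed

lemma minimal_vector_orthogonal:
  fixes f :: "'a::chilbert \<Rightarrow> complex"
  assumes add: "\<And>x y. f (x + y) = f x + f y"
    and hom: "\<And>a x. f (a *\<^sub>C x) = a * f x"
    and L: "f L = 1"
    and min: "\<And>x. f x = 1 \<Longrightarrow> sq_cnorm L \<le> sq_cnorm x"
    and k: "f k = 0"
  shows "cinner L k = 0"
proof (rule ccontr)
  assume nz: "cinner L k \<noteq> 0"
  define a where "a = (cmod (cinner L k))\<^sup>2"
  define s where "s = 1 / (sq_cnorm k + 1)"
  define c where "c = complex_of_real s * cnj (cinner L k)"
  have a: "a > 0"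
    using nz by (simp add: a_def)
  have s: "s > 0" "s * sq_cnorm k < 1"
    using sq_cnorm_nonneg[of k] by (simp_all add: s_def field_simps)
  have "f (L - c *\<^sub>C k) = 1"
    using add[of "L - c *\<^sub>C k" "c *\<^sub>C k"] hom L k by simp
  then have "sq_cnorm L \<le> sq_cnorm (L - c *\<^sub>C k)"
    by (rule min)
  also have "\<dots> = sq_cnorm L + s\<^sup>2 * a * sq_cnorm k - 2 * (s * a)"
  proof -
    have "cinner L (c *\<^sub>C k) = complex_of_real s * (cinner L k * cnj (cinner L k))"
      by (simp add: c_def cinner_scaleC_right mult_ac)
    also have "\<dots> = complex_of_real (s * a)"
      by (simp add: a_def flip: complex_norm_square)
    finally have "cinner L (c *\<^sub>C k) = complex_of_real (s * a)" .
    then show ?thesis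
      using s by (simp add: sq_cnorm_diff sq_cnorm_scaleC c_def a_def norm_mult power_mult_distrib)
  qed
  finally have "0 \<le> (s * a) * (s * sq_cnorm k - 2)"
    by (simp add: algebra_simps power2_eq_square)
  moreover have "s * a > 0"
    using s a by simp
  ultimately have "s * sq_cnorm k \<ge> 2"
    by (simp add: zero_le_mult_iff)
  with s show False
    by linarith
qed

lemma riesz_representation:
  fixes f :: "'a::chilbert \<Rightarrow> complex"
  assumes add: "\<And>x y. f (x + y) = f x + f y"
    and hom: "\<And>a x. f (a *\<^sub>C x) = a * f x"
    and bnd: "\<And>x. cmod (f x) \<le> K * cnorm x"
  shows "\<exists>z. \<forall>x. f x = cinner z x"
proof (cases "\<exists>u. f u \<noteq> 0")
  case False
  then show ?thesis
    by (intro exI[of _ 0]) simp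
next
  case True
  then obtain L where L: "f L = 1" and L_min: "\<And>x. f x = 1 \<Longrightarrow> sq_cnorm L \<le> sq_cnorm x"
    using bounded_functional_minimal_vector[OF add hom bnd] by blast
  have "sq_cnorm L \<noteq> 0"
    using L hom[of 0 L] by (auto simp: sq_cnorm_eq_0)
  have "cinner L x = f x * complex_of_real (sq_cnorm L)" for x
  proof -
    have "f (x - f x *\<^sub>C L) = 0"
      using add[of "x - f x *\<^sub>C L" "f x *\<^sub>C L"] hom L by simp
    then have "cinner L (x - f x *\<^sub>C L) = 0"
      using minimal_vector_orthogonal[of f L] add hom L L_min by blast
    then show ?thesis
      by (simp add: cinner_diff_right cinner_scaleC_right cinner_self)
  qed
  then have "f x = cinner (complex_of_real (1 / sq_cnorm L) *\<^sub>C L) x" for x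
    using \<open>sq_cnorm L \<noteq> 0\<close> by (simp add: cinner_scaleC_left field_simps)
  then show ?thesis
    by blast
qed

lemma bop_zero: "bop T \<Longrightarrow> T 0 = 0"
  unfolding bop_def by (metis add_cancel_right_left)

definition is_adjoint :: "('a::chilbert \<Rightarrow> 'a) \<Rightarrow> ('a \<Rightarrow> 'a) \<Rightarrow> bool" where
  "is_adjoint T S \<longleftrightarrow> (\<forall>x y. cinner (T x) y = cinner x (S y))"

lemma bop_adjoint_exists:
  assumes "bop T"
  shows "\<exists>S. is_adjoint T S"
proof -
  from assms obtain K where add: "\<And>x y. T (x + y) = T x + T y"
    and hom: "\<And>a x. T (a *\<^sub>C x) = a *\<^sub>C T x" and K: "\<And>x. cnorm (T x) \<le> K * cnorm x"
    unfolding bop_def by blast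
  have "\<exists>z. \<forall>x. cinner y (T x) = cinner z x" for y
  proof (rule riesz_representation)
    show "cmod (cinner y (T x)) \<le> cnorm y * K * cnorm x" for x
      using order_trans[OF cmod_cinner_le[of y "T x"] mult_left_mono[OF K cnorm_nonneg[of y]]]
      by (simp add: mult.assoc)
  qed (simp_all add: add hom cinner_add_right cinner_scaleC_right)
  then obtain S where "\<And>x y. cinner y (T x) = cinner (S y) x"
    by metis
  then have "is_adjoint T S"
    unfolding is_adjoint_def by (metis cinner_commute)
  then show ?thesis
    by blast
qed

lemma bop_is_adjoint_adj: "bop T \<Longrightarrow> is_adjoint T (adj T)"
  using bop_adjoint_exists[of T] unfolding adj_def is_adjoint_def by (rule someI_ex)

lemma is_proj_self_adjoint: "is_proj T \<Longrightarrow> is_adjoint T T"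
  using bop_is_adjoint_adj[of T] by (simp add: is_proj_def)

lemma is_adjoint_unique:
  assumes "is_adjoint T S1" "is_adjoint T S2"
  shows "S1 = S2"
proof
  fix y
  have "cinner x (S1 y - S2 y) = 0" for x
    using assms by (simp add: is_adjoint_def cinner_diff_right)
  then show "S1 y = S2 y"
    using cinner_self_eq_zero[of "S1 y - S2 y"] by simp
qed

lemma is_adjoint_comp: "is_adjoint A A' \<Longrightarrow> is_adjoint B B' \<Longrightarrow> is_adjoint (A \<circ> B) (B' \<circ> A')"
  by (simp add: is_adjoint_def)

lemma is_adjoint_sym: "is_adjoint T S \<Longrightarrow> is_adjoint S T"
  unfolding is_adjoint_def by (metis cinner_commute)

lemma is_adjoint_map_zero:
  assumes "is_adjoint T S"
  shows "S 0 = 0"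
  using assms cinner_self_eq_zero[of "S 0"] unfolding is_adjoint_def by (metis cinner_zero_right)

lemma self_adjoint_eqI:
  assumes "is_adjoint E E" "is_adjoint F F" "F \<circ> E = E" "E \<circ> F = F"
  shows "E = F"
  using is_adjoint_comp[OF assms(2,1)] assms(3,4) is_adjoint_unique[OF assms(1)] by simp

section \<open>\<open>k\<close>-graphs and their infinite paths\<close>

lemma le_add_degree: "(n::'k \<Rightarrow> nat) \<le> n + d"
  by (simp add: le_fun_def)

lemma add_diff_degree: "(p::'k \<Rightarrow> nat) \<le> q \<Longrightarrow> p + (q - p) = q"
  by (simp add: le_fun_def fun_eq_iff)

locale k_graph =
  fixes G :: "('p, 'k::finite) kgraph"
  assumes is_kgraph: "is_kgraph G"
begin

lemma rng_in_vert: "l \<in> paths G \<Longrightarrow> rng G l \<in> vert G"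
  and src_in_vert: "l \<in> paths G \<Longrightarrow> src G l \<in> vert G"
  and vert_in_paths: "v \<in> vert G \<Longrightarrow> v \<in> paths G"
  and rng_vert: "v \<in> vert G \<Longrightarrow> rng G v = v"
  and src_vert: "v \<in> vert G \<Longrightarrow> src G v = v"
  and deg_vert: "v \<in> vert G \<Longrightarrow> deg G v = 0"
  and comp_rng: "l \<in> paths G \<Longrightarrow> comp G (rng G l) l = l"
  and comp_src: "l \<in> paths G \<Longrightarrow> comp G l (src G l) = l"
  using is_kgraph unfolding is_kgraph_def by (simp_all add: subset_iff)

lemma comp_in_paths: "l \<in> paths G \<Longrightarrow> m \<in> paths G \<Longrightarrow> src G l = rng G m \<Longrightarrow> comp G l m \<in> paths G"
  and rng_comp: "l \<in> paths G \<Longrightarrow> m \<in> paths G \<Longrightarrow> src G l = rng G m \<Longrightarrow> rng G (comp G l m) = rng G l"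
  and src_comp: "l \<in> paths G \<Longrightarrow> m \<in> paths G \<Longrightarrow> src G l = rng G m \<Longrightarrow> src G (comp G l m) = src G m"
  and deg_comp: "l \<in> paths G \<Longrightarrow> m \<in> paths G \<Longrightarrow> src G l = rng G m \<Longrightarrow>
    deg G (comp G l m) = deg G l + deg G m"
  using is_kgraph unfolding is_kgraph_def by simp_all

lemma path_comp_assoc:
  "l \<in> paths G \<Longrightarrow> m \<in> paths G \<Longrightarrow> n \<in> paths G \<Longrightarrow> src G l = rng G m \<Longrightarrow> src G m = rng G n \<Longrightarrow>
    comp G (comp G l m) n = comp G l (comp G m n)"
  using is_kgraph unfolding is_kgraph_def by simp

lemma unique_factorization:
  "l \<in> paths G \<Longrightarrow> deg G l = m + n \<Longrightarrow>
    \<exists>!(a, b). a \<in> paths G \<and> b \<in> paths G \<and> src G a = rng G b \<and> l = comp G a b \<and> deg G a = m \<and> deg G b = n"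
  using is_kgraph unfolding is_kgraph_def by (elim conjE) simp

text \<open>For \<open>m \<le> d(z)\<close>, \<open>path_prefix z m\<close> and \<open>path_suffix z m\<close> are the paper's \<open>z(0, m)\<close> and
  \<open>z(m, d(z))\<close>.\<close>

definition factor :: "'p \<Rightarrow> ('k \<Rightarrow> nat) \<Rightarrow> 'p \<times> 'p" where
  "factor z m = (THE (a, b). a \<in> paths G \<and> b \<in> paths G \<and> src G a = rng G b \<and>
     z = comp G a b \<and> deg G a = m \<and> deg G b = deg G z - m)"

definition path_prefix :: "'p \<Rightarrow> ('k \<Rightarrow> nat) \<Rightarrow> 'p" where
  "path_prefix z m = fst (factor z m)"

definition path_suffix :: "'p \<Rightarrow> ('k \<Rightarrow> nat) \<Rightarrow> 'p" where
  "path_suffix z m = snd (factor z m)"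

lemma factor_spec:
  assumes z: "z \<in> paths G" and m: "m \<le> deg G z"
  shows "path_prefix z m \<in> paths G" "path_suffix z m \<in> paths G"
    "src G (path_prefix z m) = rng G (path_suffix z m)"
    "z = comp G (path_prefix z m) (path_suffix z m)"
    "deg G (path_prefix z m) = m" "deg G (path_suffix z m) = deg G z - m"
  using theI'[OF unique_factorization[OF z add_diff_degree[OF m, symmetric]]]
  unfolding path_prefix_def path_suffix_def factor_def[symmetric] by (simp_all add: case_prod_beta)

lemma factor_comp:
  assumes a: "a \<in> paths G" and b: "b \<in> paths G" and ab: "src G a = rng G b"
  shows "path_prefix (comp G a b) (deg G a) = a" "path_suffix (comp G a b) (deg G a) = b"
proof -
  let ?z = "comp G a b"
  have "\<exists>!(a', b'). a' \<in> paths G \<and> b' \<in> paths G \<and> src G a' = rng G b' \<and>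
      ?z = comp G a' b' \<and> deg G a' = deg G a \<and> deg G b' = deg G ?z - deg G a"
    using unique_factorization[OF comp_in_paths[OF a b ab]] deg_comp[OF a b ab] by simp
  then have "factor ?z (deg G a) = (a, b)"
    unfolding factor_def by (rule the1_equality) (simp add: a b ab deg_comp)
  then show "path_prefix ?z (deg G a) = a" "path_suffix ?z (deg G a) = b"
    by (simp_all add: path_prefix_def path_suffix_def)
qed

lemma comp_cancel_left:
  assumes "a \<in> paths G" "b \<in> paths G" "c \<in> paths G" "src G a = rng G b" "src G a = rng G c"
    and "comp G a b = comp G a c"
  shows "b = c"
  using factor_comp(2)[of a b] factor_comp(2)[of a c] assms by simp

lemma factor_comp_le:
  assumes a: "a \<in> paths G" and b: "b \<in> paths G" and ab: "src G a = rng G b" and n: "n \<le> deg G a"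
  shows "path_prefix (comp G a b) n = path_prefix a n"
    "path_suffix (comp G a b) n = comp G (path_suffix a n) b"
proof -
  note a' = factor_spec[OF a n]
  have sb: "src G (path_suffix a n) = rng G b"
    using src_comp[OF a'(1-3)] a'(4) ab by simp
  have "comp G a b = comp G (path_prefix a n) (comp G (path_suffix a n) b)"
    using path_comp_assoc[OF a'(1,2) b a'(3) sb] a'(4) by simp
  then show "path_prefix (comp G a b) n = path_prefix a n"
    "path_suffix (comp G a b) n = comp G (path_suffix a n) b"
    using factor_comp[OF a'(1) comp_in_paths[OF a'(2) b sb]] rng_comp[OF a'(2) b sb] a'(3,5) by simp_all
qed

lemma prefix_prefix:
  assumes z: "z \<in> paths G" and nm: "n \<le> m" and m: "m \<le> deg G z"
  shows "path_prefix (path_prefix z m) n = path_prefix z n"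
  using factor_comp_le(1)[OF factor_spec(1-3)[OF z m], of n] factor_spec(4,5)[OF z m] nm by simp

lemma suffix_deg: "z \<in> paths G \<Longrightarrow> path_suffix z (deg G z) = src G z"
  using factor_comp(2)[of z "src G z"] src_in_vert[of z] vert_in_paths rng_vert comp_src by simp

lemma suffix_zero: "z \<in> paths G \<Longrightarrow> path_suffix z 0 = z"
  using factor_comp(2)[of "rng G z" z] rng_in_vert[of z] vert_in_paths src_vert deg_vert comp_rng by simp


lemma ipath_in_paths: "x \<in> inf_paths G \<Longrightarrow> p \<le> q \<Longrightarrow> x p q \<in> paths G"
  and deg_ipath: "x \<in> inf_paths G \<Longrightarrow> p \<le> q \<Longrightarrow> deg G (x p q) = q - p"
  and rng_ipath: "x \<in> inf_paths G \<Longrightarrow> p \<le> q \<Longrightarrow> rng G (x p q) = x p p"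
  and src_ipath: "x \<in> inf_paths G \<Longrightarrow> p \<le> q \<Longrightarrow> src G (x p q) = x q q"
  and ipath_vert: "x \<in> inf_paths G \<Longrightarrow> x p p \<in> vert G"
  and ipath_comp: "x \<in> inf_paths G \<Longrightarrow> p \<le> q \<Longrightarrow> q \<le> r \<Longrightarrow> comp G (x p q) (x q r) = x p r"
  and ipath_undefined: "x \<in> inf_paths G \<Longrightarrow> \<not> p \<le> q \<Longrightarrow> x p q = undefined"
  unfolding inf_paths_def by simp_all

lemma ipath_eq_suffix:
  assumes x: "x \<in> inf_paths G" and pq: "p \<le> q"
  shows "x p q = path_suffix (x 0 q) p"
  using factor_comp(2)[of "x 0 p" "x p q"] ipath_comp[OF x _ pq, of 0] ipath_in_paths[OF x]
    rng_ipath[OF x pq] src_ipath[OF x, of 0 p] deg_ipath[OF x, of 0 p] pq by simp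

lemma ipath_prefix:
  assumes x: "x \<in> inf_paths G" and nm: "n \<le> m"
  shows "path_prefix (x 0 m) n = x 0 n"
  using factor_comp(1)[of "x 0 n" "x n m"] ipath_comp[OF x _ nm, of 0] ipath_in_paths[OF x]
    rng_ipath[OF x nm] src_ipath[OF x, of 0 n] deg_ipath[OF x, of 0 n] nm by simp

lemma ipath_eqI:
  assumes x: "x \<in> inf_paths G" and y: "y \<in> inf_paths G" and xy: "\<And>n. x 0 n = y 0 n"
  shows "x = y"
proof (intro ext)
  fix p q
  show "x p q = y p q"
  proof (cases "p \<le> q")
    case True
    then show ?thesis
      using ipath_eq_suffix[OF x True] ipath_eq_suffix[OF y True] xy by metis
  next
    case False
    then show ?thesis
      using ipath_undefined[OF x False] ipath_undefined[OF y False] by simp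
  qed
qed

lemma ipath_eqI_offset:
  assumes x: "x \<in> inf_paths G" and y: "y \<in> inf_paths G" and xy: "\<And>n. x 0 (n + d) = y 0 (n + d)"
  shows "x = y"
  using ipath_eqI[OF x y] ipath_prefix[OF x le_add_degree] ipath_prefix[OF y le_add_degree] xy by metis

definition ipath_of :: "(('k \<Rightarrow> nat) \<Rightarrow> 'p) \<Rightarrow> ('p, 'k) ipath" where
  "ipath_of f = (\<lambda>p q. if p \<le> q then path_suffix (f q) p else undefined)"

lemma ipath_of:
  assumes f: "\<And>n. f n \<in> paths G" and deg_f: "\<And>n. deg G (f n) = n"
    and compat: "\<And>n m. n \<le> m \<Longrightarrow> path_prefix (f m) n = f n"
  shows "ipath_of f \<in> inf_paths G" "ipath_of f 0 n = f n"
proof -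
  let ?x = "ipath_of f"
  have x: "?x p q = path_suffix (f q) p" if "p \<le> q" for p q
    using that by (simp add: ipath_of_def)
  have x_diag: "?x p p = src G (f p)" for p
    using x[of p p] suffix_deg[OF f] deg_f by simp
  have fac: "path_suffix (f q) p \<in> paths G" "deg G (path_suffix (f q) p) = q - p"
    "rng G (path_suffix (f q) p) = src G (f p)" "src G (path_suffix (f q) p) = src G (f q)"
    if "p \<le> q" for p q
    using factor_spec[OF f, of p q] src_comp[of "path_prefix (f q) p" "path_suffix (f q) p"]
      compat[OF that] deg_f that by simp_all
  show "?x \<in> inf_paths G"
    unfolding inf_paths_def
  proof (intro CollectI conjI allI impI)
    fix p q :: "'k \<Rightarrow> nat"
    assume pq: "p \<le> q"
    show "?x p q \<in> paths G" "deg G (?x p q) = q - p" "rng G (?x p q) = ?x p p" "src G (?x p q) = ?x q q"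
      using fac[OF pq] x[OF pq] x_diag by simp_all
  next
    fix p q r :: "'k \<Rightarrow> nat"
    assume pq: "p \<le> q" and qr: "q \<le> r"
    have "?x p q = path_suffix (path_prefix (f r) q) p"
      using x[OF pq] compat[OF qr] by simp
    then show "comp G (?x p q) (?x q r) = ?x p r"
      using factor_comp_le(2)[OF factor_spec(1-3)[OF f, of q r], of p] factor_spec(4,5)[OF f, of q r]
        x[OF qr] x[OF order_trans[OF pq qr]] deg_f pq qr by simp
  next
    show "?x p p \<in> vert G" for p
      using x_diag src_in_vert[OF f] by simp
    show "\<not> p \<le> q \<Longrightarrow> ?x p q = undefined" for p q
      by (simp add: ipath_of_def)
  qed
  show "?x 0 n = f n"
    using x[of 0 n] suffix_zero[OF f] by simp
qed

lemma shift_in_inf_paths: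
  assumes x: "x \<in> inf_paths G"
  shows "shift n x \<in> inf_paths G"
  unfolding inf_paths_def shift_def
  using ipath_in_paths[OF x] deg_ipath[OF x] rng_ipath[OF x] src_ipath[OF x] ipath_vert[OF x]
    ipath_comp[OF x] ipath_undefined[OF x] add_right_mono[of _ _ n]
  by simp

lemma ipath_shift:
  assumes "x \<in> inf_paths G"
  shows "x 0 (n + m) = comp G (x 0 m) (shift m x 0 n)"
  using ipath_comp[OF assms, of 0 m "n + m"] by (simp add: shift_def add.commute le_add_degree)


lemma shift_eqI:
  assumes l: "l \<in> paths G" and w: "w \<in> inf_paths G" and wl: "w 0 0 = src G l"
    and y: "y \<in> inf_paths G" and y_ext: "\<And>n. y 0 (n + deg G l) = comp G l (w 0 n)"
  shows "shift (deg G l) y = w"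
proof (intro ext)
  fix p q
  let ?d = "deg G l"
  show "shift ?d y p q = w p q"
  proof (cases "p \<le> q")
    case True
    have pq: "p + ?d \<le> q + ?d"
      using True by simp
    have w_0p: "w 0 p \<in> paths G" "src G l = rng G (w 0 p)"
      using ipath_in_paths[OF w] rng_ipath[OF w] wl by simp_all
    have "comp G (y 0 (p + ?d)) (y (p + ?d) (q + ?d)) = comp G l (w 0 q)"
      using ipath_comp[OF y _ pq, of 0] y_ext by simp
    also have "\<dots> = comp G (comp G l (w 0 p)) (w p q)"
      using path_comp_assoc[OF l w_0p(1) ipath_in_paths[OF w True] w_0p(2)]
        ipath_comp[OF w _ True, of 0] src_ipath[OF w, of 0 p] rng_ipath[OF w True] by simp
    also have "\<dots> = comp G (y 0 (p + ?d)) (w p q)"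
      using y_ext by simp
    finally have eq: "comp G (y 0 (p + ?d)) (y (p + ?d) (q + ?d)) = comp G (y 0 (p + ?d)) (w p q)" .
    have y_0p: "y 0 (p + ?d) \<in> paths G"
      using ipath_in_paths[OF y] by simp
    have "src G (y 0 (p + ?d)) = rng G (y (p + ?d) (q + ?d))"
      using src_ipath[OF y] rng_ipath[OF y pq] by simp
    moreover have "src G (y 0 (p + ?d)) = rng G (w p q)"
      using y_ext src_comp[OF l w_0p] src_ipath[OF w, of 0 p] rng_ipath[OF w True] by simp
    ultimately have "y (p + ?d) (q + ?d) = w p q"
      using comp_cancel_left[OF y_0p ipath_in_paths[OF y pq] ipath_in_paths[OF w True] _ _ eq] by simp
    then show ?thesis
      by (simp add: shift_def)
  next
    case False
    then show ?thesis
      using ipath_undefined[OF y, of "p + ?d" "q + ?d"] ipath_undefined[OF w] by (simp add: shift_def)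
  qed
qed

lemma pcomp_iff:
  assumes l: "l \<in> paths G" and w: "w \<in> inf_paths G" and wl: "w 0 0 = src G l"
    and y: "y \<in> inf_paths G"
  shows "y 0 (deg G l) = l \<and> shift (deg G l) y = w \<longleftrightarrow> (\<forall>n. y 0 (n + deg G l) = comp G l (w 0 n))"
proof
  assume "y 0 (deg G l) = l \<and> shift (deg G l) y = w"
  then show "\<forall>n. y 0 (n + deg G l) = comp G l (w 0 n)"
    using ipath_shift[OF y] by simp
next
  assume y_ext: "\<forall>n. y 0 (n + deg G l) = comp G l (w 0 n)"
  then have "y 0 (deg G l) = l"
    using wl comp_src[OF l] by (metis add_0)
  moreover have "shift (deg G l) y = w"
    using shift_eqI[OF l w wl y] y_ext by blast
  ultimately show "y 0 (deg G l) = l \<and> shift (deg G l) y = w" ..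
qed

lemma pcomp_exists:
  assumes l: "l \<in> paths G" and w: "w \<in> inf_paths G" and wl: "w 0 0 = src G l"
  shows "\<exists>y\<in>inf_paths G. \<forall>n. y 0 (n + deg G l) = comp G l (w 0 n)"
proof -
  let ?d = "deg G l"
  define g where "g n = comp G l (w 0 n)" for n
  have w_paths: "w 0 n \<in> paths G" "src G l = rng G (w 0 n)" for n
    using ipath_in_paths[OF w] rng_ipath[OF w] wl by simp_all
  have g: "g n \<in> paths G" "deg G (g n) = n + ?d" for n
    using comp_in_paths[OF l w_paths] deg_comp[OF l w_paths] deg_ipath[OF w, of 0 n]
    by (simp_all add: g_def add.commute)
  have g_split: "g m = comp G (g n) (w n m)" and g_split_src: "src G (g n) = rng G (w n m)"
    if "n \<le> m" for n m
    using path_comp_assoc[OF l w_paths(1) ipath_in_paths[OF w that] w_paths(2)] ipath_comp[OF w _ that, of 0]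
      src_comp[OF l w_paths] src_ipath[OF w, of 0 n] rng_ipath[OF w that] by (simp_all add: g_def)
  define f where "f n = path_prefix (g n) n" for n
  have n_le: "n \<le> deg G (g n)" for n
    by (simp add: g(2) le_add_degree)
  have f: "f n \<in> paths G" "deg G (f n) = n" for n
    using factor_spec(1,5)[OF g(1) n_le] by (simp_all add: f_def)
  have "path_prefix (f m) n = f n" if nm: "n \<le> m" for n m
  proof -
    have "path_prefix (f m) n = path_prefix (comp G (g n) (w n m)) n"
      using prefix_prefix[OF g(1) nm n_le] g_split[OF nm] by (simp add: f_def)
    also have "\<dots> = f n"
      using factor_comp_le(1)[OF g(1) ipath_in_paths[OF w nm] g_split_src[OF nm] n_le]
      by (simp add: f_def)
    finally show ?thesis .
  qed
  note y = ipath_of[OF f this]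
  have "ipath_of f 0 (n + ?d) = g n" for n
  proof -
    have nd: "n \<le> n + ?d"
      by (rule le_add_degree)
    then have "ipath_of f 0 (n + ?d) = path_prefix (comp G (g n) (w n (n + ?d))) (deg G (g n))"
      by (simp add: y(2) f_def g_split[OF nd] g(2))
    also have "\<dots> = g n"
      by (rule factor_comp(1)[OF g(1) ipath_in_paths[OF w nd] g_split_src[OF nd]])
    finally show ?thesis .
  qed
  then show ?thesis
    using y(1) by (auto simp: g_def)
qed

lemma pcomp:
  assumes l: "l \<in> paths G" and w: "w \<in> inf_paths G" and wl: "w 0 0 = src G l"
  shows "pcomp G l w \<in> inf_paths G" "pcomp G l w 0 (deg G l) = l" "shift (deg G l) (pcomp G l w) = w"
    "pcomp G l w 0 (n + deg G l) = comp G l (w 0 n)"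
proof -
  obtain y where y: "y \<in> inf_paths G" "\<forall>n. y 0 (n + deg G l) = comp G l (w 0 n)"
    using pcomp_exists[OF l w wl] by blast
  have "pcomp G l w = y"
    unfolding pcomp_def
  proof (rule the_equality)
    show "y \<in> inf_paths G \<and> y 0 (deg G l) = l \<and> shift (deg G l) y = w"
      using y pcomp_iff[OF l w wl] by blast
  next
    fix y'
    assume "y' \<in> inf_paths G \<and> y' 0 (deg G l) = l \<and> shift (deg G l) y' = w"
    then show "y' = y"
      using pcomp_iff[OF l w wl] ipath_eqI_offset y by metis
  qed
  moreover have "y 0 (deg G l) = l" "shift (deg G l) y = w"
    using y pcomp_iff[OF l w wl] by blast+
  ultimately show "pcomp G l w \<in> inf_paths G" "pcomp G l w 0 (deg G l) = l"
    "shift (deg G l) (pcomp G l w) = w" "pcomp G l w 0 (n + deg G l) = comp G l (w 0 n)"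
    using y by simp_all
qed

lemma pcomp_shift:
  assumes w: "w \<in> inf_paths G"
  shows "pcomp G (w 0 n) (shift n w) = w"
proof -
  have l: "w 0 n \<in> paths G" "deg G (w 0 n) = n" "shift n w 0 0 = src G (w 0 n)"
    using ipath_in_paths[OF w] deg_ipath[OF w] src_ipath[OF w] by (simp_all add: shift_def)
  show ?thesis
    using ipath_eqI_offset[OF pcomp(1)[OF l(1) shift_in_inf_paths[OF w] l(3)] w]
      pcomp(4)[OF l(1) shift_in_inf_paths[OF w] l(3)] ipath_shift[OF w] l(2) by metis
qed

lemma ipath_in_cyl: "x \<in> inf_paths G \<Longrightarrow> x \<in> cyl G (x 0 n)"
  using deg_ipath[of x 0 n] by (simp add: cyl_def)

lemma cyl_in_path_borel: "l \<in> paths G \<Longrightarrow> cyl G l \<in> path_borel G"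
  by (simp add: path_borel_def)

lemma singleton_in_path_borel:
  assumes w: "w \<in> inf_paths G"
  shows "{w} \<in> path_borel G"
proof -
  have "(\<Inter>m::nat. cyl G (w 0 (\<lambda>_. m))) = {w}"
  proof (intro equalityI subsetI)
    fix x
    assume x_cyl: "x \<in> (\<Inter>m::nat. cyl G (w 0 (\<lambda>_. m)))"
    have deg_w: "deg G (w 0 (\<lambda>_. m)) = (\<lambda>_. m)" for m
      by (simp add: deg_ipath[OF w])
    have x: "x \<in> inf_paths G" and x_eq: "x 0 (\<lambda>_. m) = w 0 (\<lambda>_. m)" for m
      using x_cyl by (auto simp: cyl_def deg_w)
    have "x 0 n = w 0 n" for n
    proof -
      have "n \<le> (\<lambda>_. Max (range n))"
        by (simp add: le_fun_def)
      then show ?thesis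
        using ipath_prefix[OF x] ipath_prefix[OF w] x_eq by metis
    qed
    then show "x \<in> {w}"
      using ipath_eqI[OF x w] by simp
  qed (use w ipath_in_cyl in blast)
  moreover have "(\<Inter>m::nat. cyl G (w 0 (\<lambda>_. m))) \<in> path_borel G"
    unfolding path_borel_def
    by (rule sigma_sets_Inter) (auto simp: cyl_def ipath_in_paths[OF w])
  ultimately show ?thesis
    by simp
qed

end

section \<open>Representations and their projection valued measures\<close>

locale ck_rep_pvm = k_graph G for G :: "('p, 'k::finite) kgraph" +
  fixes t :: "'p \<Rightarrow> 'a::chilbert \<Rightarrow> 'a"
    and P :: "('p, 'k) ipath set \<Rightarrow> 'a \<Rightarrow> 'a"
  assumes ck_rep: "ck_rep G t"
    and assoc_pvm: "assoc_pvm G t P"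
begin

lemma t_bop: "l \<in> paths G \<Longrightarrow> bop (t l)"
  using ck_rep unfolding ck_rep_def by (elim conjE) simp

lemma t_vert_proj: "v \<in> vert G \<Longrightarrow> is_proj (t v)"
  using ck_rep unfolding ck_rep_def by (elim conjE) simp

lemma adj_t_t: "l \<in> paths G \<Longrightarrow> adj (t l) (t l x) = t (src G l) x"
  using ck_rep unfolding ck_rep_def by (elim conjE) (simp add: fun_eq_iff)

lemma t_comp: "l \<in> paths G \<Longrightarrow> m \<in> paths G \<Longrightarrow> src G l = rng G m \<Longrightarrow> t (comp G l m) x = t l (t m x)"
  using ck_rep unfolding ck_rep_def by (elim conjE) (simp add: fun_eq_iff)

lemma t_is_adjoint: "l \<in> paths G \<Longrightarrow> is_adjoint (t l) (adj (t l))"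
  by (rule bop_is_adjoint_adj[OF t_bop])

lemma P_proj: "A \<in> path_borel G \<Longrightarrow> is_proj (P A)"
  using assoc_pvm unfolding assoc_pvm_def is_pvm_def by (elim conjE) simp

lemma P_empty: "P {} x = 0"
  using assoc_pvm unfolding assoc_pvm_def is_pvm_def by (elim conjE) simp

lemma P_inter: "A \<in> path_borel G \<Longrightarrow> B \<in> path_borel G \<Longrightarrow> P (A \<inter> B) x = P A (P B x)"
  using assoc_pvm unfolding assoc_pvm_def is_pvm_def by (elim conjE) (simp add: fun_eq_iff)

lemma P_cyl: "l \<in> paths G \<Longrightarrow> P (cyl G l) x = t l (adj (t l) x)"
  using assoc_pvm unfolding assoc_pvm_def is_pvm_def by (elim conjE) (simp add: fun_eq_iff)

lemma P_zero: "A \<in> path_borel G \<Longrightarrow> P A 0 = 0"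
  using P_proj[of A] bop_zero[of "P A"] by (simp add: is_proj_def)

lemma P_subset:
  assumes "A \<in> path_borel G" "B \<in> path_borel G" "A \<subseteq> B"
  shows "P A (P B x) = P A x" "P B (P A x) = P A x"
  using P_inter[OF assms(1,2)] P_inter[OF assms(2,1)] assms(3) by (simp_all add: Int_absorb1 Int_absorb2)

lemma P_disjoint: "A \<in> path_borel G \<Longrightarrow> B \<in> path_borel G \<Longrightarrow> A \<inter> B = {} \<Longrightarrow> P A (P B x) = 0"
  using P_inter[of A B x] P_empty by simp

lemma t_src: "l \<in> paths G \<Longrightarrow> t l (t (src G l) x) = t l x"
  using t_comp[of l "src G l" x] src_in_vert vert_in_paths rng_vert comp_src by simp

lemma adj_t_comp:
  assumes "l \<in> paths G" "m \<in> paths G" "src G l = rng G m"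
  shows "adj (t l) (t (comp G l m) x) = t m x"
  using assms t_comp[OF assms] adj_t_t t_comp[of "rng G m" m x] rng_in_vert[OF assms(2)] vert_in_paths
    src_vert comp_rng[OF assms(2)] by simp

lemma P_cyl_t: "l \<in> paths G \<Longrightarrow> P (cyl G l) (t l x) = t l x"
  by (simp add: P_cyl adj_t_t t_src)

lemma P_cyl_vert: "v \<in> vert G \<Longrightarrow> P (cyl G v) x = t v x"
  using P_cyl[OF vert_in_paths] t_vert_proj[of v] by (simp add: is_proj_def fun_eq_iff)

lemma P_singleton_t_eq_zero:
  assumes w: "w \<in> inf_paths G" and l: "l \<in> paths G" and "w \<notin> cyl G l"
  shows "P {w} (t l x) = 0"
proof -
  have "{w} \<inter> cyl G l = {}"
    using assms(3) by simp
  then show ?thesis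
    using P_disjoint[OF singleton_in_path_borel[OF w] cyl_in_path_borel[OF l]] P_cyl_t[OF l] by metis
qed

lemma P_singleton_cyl:
  assumes \<omega>: "\<omega> \<in> cyl G l" and l: "l \<in> paths G"
  shows "P (cyl G l) (P {\<omega>} x) = P {\<omega>} x" "P {\<omega>} (P (cyl G l) x) = P {\<omega>} x"
proof -
  have "{\<omega>} \<in> path_borel G"
    using \<omega> singleton_in_path_borel by (simp add: cyl_def)
  then show "P (cyl G l) (P {\<omega>} x) = P {\<omega>} x" "P {\<omega>} (P (cyl G l) x) = P {\<omega>} x"
    using P_subset[OF _ cyl_in_path_borel[OF l], of "{\<omega>}" x] \<omega> by simp_all
qed

lemma adj_t_P_singleton_t_eq_zero:
  assumes e: "e \<in> paths G" and w: "w \<in> inf_paths G" and ne: "w 0 (deg G e) \<noteq> e"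
  shows "adj (t e) \<circ> P {w} \<circ> t e = (\<lambda>_. 0)"
proof
  fix x
  have "w \<notin> cyl G e"
    using ne by (simp add: cyl_def)
  then have "P {w} (t e x) = 0"
    by (rule P_singleton_t_eq_zero[OF w e])
  then show "(adj (t e) \<circ> P {w} \<circ> t e) x = 0"
    using is_adjoint_map_zero[OF t_is_adjoint[OF e]] by simp
qed

end

locale atomic_ck_rep_pvm = ck_rep_pvm +
  assumes purely_atomic: "purely_atomic G P"
begin

lemma purely_atomicE:
  obtains Om where "Om \<subseteq> inf_paths G" "\<And>\<omega> x. \<omega> \<in> inf_paths G \<Longrightarrow> \<omega> \<notin> Om \<Longrightarrow> P {\<omega>} x = 0"
    "\<And>x e. e > 0 \<Longrightarrow> \<exists>F. finite F \<and> F \<subseteq> Om \<and>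
        (\<forall>F'. finite F' \<longrightarrow> F \<subseteq> F' \<longrightarrow> F' \<subseteq> Om \<longrightarrow> cnorm (x - (\<Sum>w\<in>F'. P {w} x)) < e)"
proof -
  obtain Om where Om: "Om \<in> path_borel G" and null: "P (inf_paths G - Om) = (\<lambda>_. 0)"
    and approx: "\<And>x e. e > 0 \<Longrightarrow> \<exists>F. finite F \<and> F \<subseteq> Om \<and>
        (\<forall>F'. finite F' \<longrightarrow> F \<subseteq> F' \<longrightarrow> F' \<subseteq> Om \<longrightarrow> cnorm (x - (\<Sum>w\<in>F'. P {w} x)) < e)"
    using purely_atomic unfolding purely_atomic_def by (elim bexE conjE) (metis that)
  have "Om \<subseteq> inf_paths G"
    using Om sigma_sets_into_sp[of "cyl G ` paths G" "inf_paths G"] by (auto simp: path_borel_def cyl_def)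
  moreover have "P {\<omega>} x = 0" if \<omega>: "\<omega> \<in> inf_paths G" and "\<omega> \<notin> Om" for \<omega> x
  proof -
    have "P {\<omega>} x = P {\<omega>} (P (inf_paths G - Om) x)"
      using P_subset(1)[OF singleton_in_path_borel[OF \<omega>], of "inf_paths G - Om"] Om that
      by (simp add: path_borel_def sigma_sets.Compl)
    then show ?thesis
      using null P_zero[OF singleton_in_path_borel[OF \<omega>]] by simp
  qed
  ultimately show ?thesis
    using approx by (rule that)
qed

lemma P_singleton_fixes:
  assumes \<omega>: "\<omega> \<in> inf_paths G" and others: "\<And>w. w \<in> inf_paths G \<Longrightarrow> w \<noteq> \<omega> \<Longrightarrow> P {w} x = 0"
  shows "P {\<omega>} x = x"
proof (rule purely_atomicE)
  fix Om
  assume Om: "Om \<subseteq> inf_paths G"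
    and outside: "\<And>\<omega> x. \<omega> \<in> inf_paths G \<Longrightarrow> \<omega> \<notin> Om \<Longrightarrow> P {\<omega>} x = 0"
    and approx: "\<And>x e. e > 0 \<Longrightarrow> \<exists>F. finite F \<and> F \<subseteq> Om \<and>
        (\<forall>F'. finite F' \<longrightarrow> F \<subseteq> F' \<longrightarrow> F' \<subseteq> Om \<longrightarrow> cnorm (x - (\<Sum>w\<in>F'. P {w} x)) < e)"
  have sum_eq: "(\<Sum>w\<in>F. P {w} x) = P {\<omega>} x" if "finite F" "F \<subseteq> Om" "\<omega> \<in> Om \<longrightarrow> \<omega> \<in> F" for F
  proof -
    have "(\<Sum>w\<in>F. P {w} x) = (\<Sum>w\<in>F. if w = \<omega> then P {\<omega>} x else 0)"
      using others that Om by (intro sum.cong) auto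
    also have "\<dots> = P {\<omega>} x"
      using that outside[OF \<omega>] by (auto simp: sum.delta)
    finally show ?thesis .
  qed
  have "cnorm (x - P {\<omega>} x) < e" if e: "e > 0" for e
  proof -
    obtain F where F: "finite F" "F \<subseteq> Om"
      and F_approx: "\<And>F'. finite F' \<Longrightarrow> F \<subseteq> F' \<Longrightarrow> F' \<subseteq> Om \<Longrightarrow> cnorm (x - (\<Sum>w\<in>F'. P {w} x)) < e"
      using approx[of e x, OF e] by blast
    let ?F = "F \<union> ({\<omega>} \<inter> Om)"
    have "finite ?F" "F \<subseteq> ?F" "?F \<subseteq> Om"
      using F by auto
    then have "cnorm (x - (\<Sum>w\<in>?F. P {w} x)) < e"
      by (rule F_approx)
    moreover have "(\<Sum>w\<in>?F. P {w} x) = P {\<omega>} x"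
      by (rule sum_eq) (use F in auto)
    ultimately show ?thesis
      by simp
  qed
  then have "\<not> 0 < cnorm (x - P {\<omega>} x)"
    using less_irrefl by blast
  then have "cnorm (x - P {\<omega>} x) = 0"
    using cnorm_nonneg[of "x - P {\<omega>} x"] by linarith
  then show ?thesis
    by (simp add: cnorm_eq_0)
qed

context
  fixes l \<omega>
  assumes l: "l \<in> paths G" and \<omega>: "\<omega> \<in> inf_paths G" and \<omega>_l: "\<omega> 0 0 = src G l"
begin

lemma ipath_initial:
  shows "\<omega> 0 n \<in> paths G" "src G l = rng G (\<omega> 0 n)" "deg G (\<omega> 0 n) = n"
  using ipath_in_paths[OF \<omega>] rng_ipath[OF \<omega>] deg_ipath[OF \<omega>] \<omega>_l by simp_all

lemma P_pcomp_t_P: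
  "P {pcomp G l \<omega>} (t l (P {\<omega>} x)) = t l (P {\<omega>} x)"
proof (rule P_singleton_fixes[OF pcomp(1)[OF l \<omega> \<omega>_l]])
  fix w
  assume w: "w \<in> inf_paths G" and ne: "w \<noteq> pcomp G l \<omega>"
  obtain n where n: "w 0 (n + deg G l) \<noteq> comp G l (\<omega> 0 n)"
    using ipath_eqI_offset[OF w pcomp(1)[OF l \<omega> \<omega>_l]] pcomp(4)[OF l \<omega> \<omega>_l] ne by metis
  let ?\<mu> = "\<omega> 0 n"
  note \<mu> = ipath_initial[of n]
  have "t l (P {\<omega>} x) = t l (P (cyl G ?\<mu>) (P {\<omega>} x))"
    using P_singleton_cyl(1)[OF ipath_in_cyl[OF \<omega>] \<mu>(1)] by simp
  also have "\<dots> = t (comp G l ?\<mu>) (adj (t ?\<mu>) (P {\<omega>} x))"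
    using P_cyl[OF \<mu>(1)] t_comp[OF l \<mu>(1,2)] by simp
  finally have "t l (P {\<omega>} x) = t (comp G l ?\<mu>) (adj (t ?\<mu>) (P {\<omega>} x))" .
  moreover have "w \<notin> cyl G (comp G l ?\<mu>)"
    using n deg_comp[OF l \<mu>(1,2)] \<mu>(3) by (simp add: cyl_def add.commute)
  ultimately show "P {w} (t l (P {\<omega>} x)) = 0"
    using P_singleton_t_eq_zero[OF w comp_in_paths[OF l \<mu>(1,2)]] by simp
qed

lemma P_adj_t_P_pcomp:
  "P {\<omega>} (adj (t l) (P {pcomp G l \<omega>} x)) = adj (t l) (P {pcomp G l \<omega>} x)"
proof (rule P_singleton_fixes[OF \<omega>])
  fix w
  assume w: "w \<in> inf_paths G" and ne: "w \<noteq> \<omega>"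
  obtain n where n: "w 0 n \<noteq> \<omega> 0 n"
    using ipath_eqI[OF w \<omega>] ne by blast
  let ?\<mu> = "\<omega> 0 n" and ?\<omega>' = "pcomp G l \<omega>"
  note \<mu> = ipath_initial[of n]
  have "deg G (comp G l ?\<mu>) = n + deg G l"
    using deg_comp[OF l \<mu>(1,2)] \<mu>(3) by (simp add: add.commute)
  then have "?\<omega>' \<in> cyl G (comp G l ?\<mu>)"
    using ipath_in_cyl[OF pcomp(1)[OF l \<omega> \<omega>_l], of "n + deg G l"] pcomp(4)[OF l \<omega> \<omega>_l, of n] by metis
  then have "adj (t l) (P {?\<omega>'} x) = adj (t l) (P (cyl G (comp G l ?\<mu>)) (P {?\<omega>'} x))"
    using P_singleton_cyl(1)[OF _ comp_in_paths[OF l \<mu>(1,2)]] by simp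
  also have "\<dots> = t ?\<mu> (adj (t (comp G l ?\<mu>)) (P {?\<omega>'} x))"
    using P_cyl[OF comp_in_paths[OF l \<mu>(1,2)]] adj_t_comp[OF l \<mu>(1,2)] by simp
  finally have "adj (t l) (P {?\<omega>'} x) = t ?\<mu> (adj (t (comp G l ?\<mu>)) (P {?\<omega>'} x))" .
  moreover have "w \<notin> cyl G ?\<mu>"
    using n \<mu>(3) by (simp add: cyl_def)
  ultimately show "P {w} (adj (t l) (P {?\<omega>'} x)) = 0"
    using P_singleton_t_eq_zero[OF w \<mu>(1)] by simp
qed

lemma t_P_singleton_adj: "t l \<circ> P {\<omega>} \<circ> adj (t l) = P {pcomp G l \<omega>}"
proof (rule self_adjoint_eqI)
  let ?\<omega>' = "pcomp G l \<omega>"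
  have P\<omega>: "is_adjoint (P {\<omega>}) (P {\<omega>})" and P\<omega>': "is_adjoint (P {?\<omega>'}) (P {?\<omega>'})"
    using is_proj_self_adjoint[OF P_proj[OF singleton_in_path_borel]] \<omega> pcomp(1)[OF l \<omega> \<omega>_l] by blast+
  show "is_adjoint (t l \<circ> P {\<omega>} \<circ> adj (t l)) (t l \<circ> P {\<omega>} \<circ> adj (t l))"
    using is_adjoint_comp[OF is_adjoint_comp[OF t_is_adjoint[OF l] P\<omega>] is_adjoint_sym[OF t_is_adjoint[OF l]]]
    by (simp add: comp_assoc)
  show "is_adjoint (P {?\<omega>'}) (P {?\<omega>'})"
    by (rule P\<omega>')
  show "P {?\<omega>'} \<circ> (t l \<circ> P {\<omega>} \<circ> adj (t l)) = t l \<circ> P {\<omega>} \<circ> adj (t l)"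
    by (simp add: fun_eq_iff P_pcomp_t_P)
  have "P {?\<omega>'} x = t l (P {\<omega>} (adj (t l) (P {?\<omega>'} x)))" for x
    using P_singleton_cyl(1)[of ?\<omega>' l x] P_cyl[OF l] P_adj_t_P_pcomp[of x] pcomp(1,2)[OF l \<omega> \<omega>_l]
    by (simp add: cyl_def l)
  then show "(t l \<circ> P {\<omega>} \<circ> adj (t l)) \<circ> P {?\<omega>'} = P {?\<omega>'}"
    by (simp add: fun_eq_iff)
qed

lemma adj_t_P_pcomp_t: "adj (t l) \<circ> P {pcomp G l \<omega>} \<circ> t l = P {\<omega>}"
proof
  fix x
  have s: "src G l \<in> vert G" "\<omega> \<in> cyl G (src G l)"
    using src_in_vert[OF l] \<omega> \<omega>_l deg_vert[OF src_in_vert[OF l]] by (simp_all add: cyl_def)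
  have "(adj (t l) \<circ> P {pcomp G l \<omega>} \<circ> t l) x = adj (t l) (t l (P {\<omega>} (adj (t l) (t l x))))"
    by (simp flip: t_P_singleton_adj)
  also have "\<dots> = P (cyl G (src G l)) (P {\<omega>} (P (cyl G (src G l)) x))"
    by (simp add: adj_t_t l P_cyl_vert s(1))
  also have "\<dots> = P {\<omega>} x"
    using P_singleton_cyl[OF s(2) vert_in_paths[OF s(1)]] by simp
  finally show "(adj (t l) \<circ> P {pcomp G l \<omega>} \<circ> t l) x = P {\<omega>} x" .
qed

end

lemma adj_t_P_singleton_shift:
  assumes w: "w \<in> inf_paths G"
  shows "adj (t (w 0 n)) \<circ> P {w} \<circ> t (w 0 n) = P {shift n w}"
proof -
  have "w 0 n \<in> paths G" "shift n w 0 0 = src G (w 0 n)"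
    using ipath_in_paths[OF w] src_ipath[OF w] by (simp_all add: shift_def)
  then show ?thesis
    using adj_t_P_pcomp_t[OF _ shift_in_inf_paths[OF w]] pcomp_shift[OF w, of n] by metis
qed

end

theorem proposition3p3:
  fixes G :: "('p, 'k::finite) kgraph"
    and t :: "'p \<Rightarrow> 'a::chilbert \<Rightarrow> 'a"
    and P :: "('p, 'k) ipath set \<Rightarrow> 'a \<Rightarrow> 'a"
  assumes "is_kgraph G" and "row_finite G" and "no_sources G"
    and "ck_rep G t" and "assoc_pvm G t P" and "purely_atomic G P"
  shows "(\<forall>l\<in>paths G. \<forall>w\<in>inf_paths G. w 0 0 = src G l \<longrightarrow>
            t l \<circ> P {w} \<circ> adj (t l) = P {pcomp G l w})
       \<and> (\<forall>w\<in>inf_paths G. \<forall>n. adj (t (w 0 n)) \<circ> P {w} \<circ> t (w 0 n) = P {shift n w})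
       \<and> (\<forall>n. \<forall>e\<in>paths G. \<forall>w\<in>inf_paths G. deg G e = n \<longrightarrow> e \<noteq> w 0 n \<longrightarrow>
            adj (t e) \<circ> P {w} \<circ> t e = (\<lambda>_. 0))"
proof -
  interpret atomic_ck_rep_pvm G t P
    by unfold_locales (fact assms)+
  show ?thesis
    using t_P_singleton_adj adj_t_P_singleton_shift adj_t_P_singleton_t_eq_zero by auto
qed

end
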